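(* Let $s\ge1$ and $n\ge1$ be integers, $\Sigma=\{-s,\dots,-1,0,1,\dots,s\}$ and $\Sigma_*=\Sigma\setminus\{0\}$. Every string ${\bf t}\in\Sigma^n$ is equivalent to one and only one string of the form $x_1x_2\cdots x_k\underbrace{0\cdots0}_{n-k}$ with $0\le k\le n$, $x_i\in\Sigma_*$ for all $i$, and such that there is no index $i$ with $x_i=m\in\{1,\dots,s\}$ and $x_{i+1}=-m$.
   Context: The local moves on strings in $\Sigma^n$ are: replace an adjacent pair $(0,m)$ by $(m,0)$ or vice versa, for any $m\in\Sigma_*$; and replace an adjacent pair $(0,0)$ by $(m,-m)$ or vice versa, for any $m\in\{1,\dots,s\}$. Two strings are equivalent if one can be obtained from the other by a finite sequence of local moves. *)

theory Defs
  imports Main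
begin

definition Sigma :: "nat \<Rightarrow> int set" where
  "Sigma s = {- int s .. int s}"

definition Sigma_star :: "nat \<Rightarrow> int set" where
  "Sigma_star s = Sigma s - {0}"

definition pair_move :: "nat \<Rightarrow> int \<times> int \<Rightarrow> int \<times> int \<Rightarrow> bool" where
  "pair_move s p q \<longleftrightarrow>
     (\<exists>m \<in> Sigma_star s. (p = (0, m) \<and> q = (m, 0)) \<or> (p = (m, 0) \<and> q = (0, m))) \<or>
     (\<exists>m \<in> {1 .. int s}. (p = (0, 0) \<and> q = (m, -m)) \<or> (p = (m, -m) \<and> q = (0, 0)))"

definition local_move :: "nat \<Rightarrow> int list \<Rightarrow> int list \<Rightarrow> bool" where
  "local_move s u v \<longleftrightarrow>
     (\<exists>xs ys a b c d. u = xs @ [a, b] @ ys \<and> v = xs @ [c, d] @ ys \<and> pair_move s (a, b) (c, d))"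

definition equiv_str :: "nat \<Rightarrow> int list \<Rightarrow> int list \<Rightarrow> bool" where
  "equiv_str s u v \<longleftrightarrow> (local_move s)\<^sup>*\<^sup>* u v"

definition normal_form :: "nat \<Rightarrow> nat \<Rightarrow> int list \<Rightarrow> bool" where
  "normal_form s n w \<longleftrightarrow>
     (\<exists>xs k. k \<le> n \<and> length xs = k \<and> w = xs @ replicate (n - k) 0 \<and>
        set xs \<subseteq> Sigma_star s \<and>
        \<not> (\<exists>i. i + 1 < k \<and> xs ! i \<in> {1 .. int s} \<and> xs ! (i + 1) = - (xs ! i)))"

end

theory Submission
  imports Defs
begin

text \<open>
  Read a string as a word in which zeros are erased and a letter \<open>m > 0\<close> cancels against a
  directly following \<open>-m\<close>. Reducing from the right, one letter at a time (\<open>cancel_cons\<close>),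
  gives a map \<open>reduce\<close> that is invariant under local moves, because pushing \<open>a, b\<close> or
  \<open>c, d\<close> onto a reduced word has the same effect whenever \<open>(a,b) \<mapsto> (c,d)\<close> is a pair move.
  Conversely every string can be moved to its reduction followed by zeros: zeros travel right
  past nonzero letters, and a cancelling pair \<open>m,-m\<close> turns into \<open>0,0\<close>. Normal forms are
  exactly reduced words padded with zeros, and these are fixed by \<open>reduce\<close>.
\<close>

definition cancel_cons :: "int \<Rightarrow> int list \<Rightarrow> int list" where
  "cancel_cons x ys =
    (if x = 0 then ys
     else case ys of
       [] \<Rightarrow> [x]
     | y # ys' \<Rightarrow> if 0 < x \<and> y = - x then ys' else x # ys)"

definition reduce :: "int list \<Rightarrow> int list" where
  "reduce xs = foldr cancel_cons xs []"

definition reduced :: "int list \<Rightarrow> bool" where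
  "reduced xs \<longleftrightarrow> 0 \<notin> set xs \<and> successively (\<lambda>x y. \<not> (0 < x \<and> y = - x)) xs"

definition pad_zeros :: "nat \<Rightarrow> int list \<Rightarrow> int list" where
  "pad_zeros n xs = xs @ replicate (n - length xs) 0"

lemma reduce_Nil [simp]: "reduce [] = []"
  by (simp add: reduce_def)

lemma reduce_Cons [simp]: "reduce (x # xs) = cancel_cons x (reduce xs)"
  by (simp add: reduce_def)

lemma reduce_append: "reduce (xs @ ys) = foldr cancel_cons xs (reduce ys)"
  by (simp add: reduce_def)

lemma reduce_replicate_zero [simp]: "reduce (replicate k 0) = []"
  by (induction k) (simp_all add: cancel_cons_def)

lemma cancel_cons_zero [simp]: "cancel_cons 0 ys = ys"
  by (simp add: cancel_cons_def)

lemma cancel_cons_neg [simp]: "x < 0 \<Longrightarrow> cancel_cons x ys = x # ys"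
  by (cases ys) (simp_all add: cancel_cons_def)

lemma cancel_cons_inverse [simp]: "0 < x \<Longrightarrow> cancel_cons x (- x # ys) = ys"
  by (simp add: cancel_cons_def)

lemma reduced_Nil [simp]: "reduced []"
  by (simp add: reduced_def)

lemma reduced_Cons_iff:
  "reduced (x # xs) \<longleftrightarrow> x \<noteq> 0 \<and> (xs = [] \<or> \<not> (0 < x \<and> hd xs = - x)) \<and> reduced xs"
  by (auto simp: reduced_def successively_Cons)

lemma reduced_cancel_cons: "reduced ys \<Longrightarrow> reduced (cancel_cons x ys)"
  by (cases ys) (auto simp: cancel_cons_def reduced_Cons_iff)

lemma reduced_reduce: "reduced (reduce xs)"
  by (induction xs) (simp_all add: reduced_cancel_cons)

lemma set_reduce: "set (reduce xs) \<subseteq> set xs - {0}"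
proof (induction xs)
  case (Cons x xs)
  have "set (cancel_cons x ys) \<subseteq> set ys \<union> ({x} - {0})" for ys
    by (cases ys) (auto simp: cancel_cons_def)
  from this[of "reduce xs"] Cons show ?case
    by auto
qed simp

lemma length_reduce_le: "length (reduce xs) \<le> length xs"
proof (induction xs)
  case (Cons x xs)
  have "length (cancel_cons x ys) \<le> Suc (length ys)" for ys
    by (cases ys) (auto simp: cancel_cons_def)
  from this[of "reduce xs"] Cons show ?case
    by simp
qed simp

lemma reduce_reduced: "reduced xs \<Longrightarrow> reduce xs = xs"
  by (induction xs) (auto simp: reduced_Cons_iff cancel_cons_def split: list.split)

lemma reduce_pad_zeros: "reduce (pad_zeros n xs) = reduce xs"
  unfolding pad_zeros_def reduce_append reduce_replicate_zero by (simp add: reduce_def)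

lemma cancel_cons_pair_move:
  assumes "pair_move s (a, b) (c, d)"
  shows "cancel_cons a (cancel_cons b ys) = cancel_cons c (cancel_cons d ys)"
  using assms by (auto simp: pair_move_def)

lemma reduce_local_move:
  assumes "local_move s u v"
  shows "reduce u = reduce v"
proof -
  obtain xs ys a b c d where "u = xs @ [a, b] @ ys" "v = xs @ [c, d] @ ys"
    and move: "pair_move s (a, b) (c, d)"
    using assms unfolding local_move_def by blast
  then show ?thesis
    by (simp add: reduce_append cancel_cons_pair_move[OF move])
qed

lemma reduce_equiv_str: "equiv_str s u v \<Longrightarrow> reduce u = reduce v"
  unfolding equiv_str_def
  by (induction rule: rtranclp_induct) (auto dest: reduce_local_move)

lemma pair_move_swap_zero: "m \<in> Sigma_star s \<Longrightarrow> pair_move s (0, m) (m, 0)"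
  by (auto simp: pair_move_def)

lemma pair_move_cancel: "m \<in> {1 .. int s} \<Longrightarrow> pair_move s (m, - m) (0, 0)"
  by (auto simp: pair_move_def)

lemma local_moveI: "pair_move s (a, b) (c, d) \<Longrightarrow> local_move s (xs @ a # b # ys) (xs @ c # d # ys)"
  unfolding local_move_def by fastforce

lemma equiv_str_refl [simp]: "equiv_str s u u"
  by (simp add: equiv_str_def)

lemma equiv_str_trans [trans]: "equiv_str s u v \<Longrightarrow> equiv_str s v w \<Longrightarrow> equiv_str s u w"
  unfolding equiv_str_def by (rule rtranclp_trans)

lemma equiv_str_pair_move:
  "pair_move s (a, b) (c, d) \<Longrightarrow> equiv_str s (xs @ a # b # ys) (xs @ c # d # ys)"
  unfolding equiv_str_def by (rule r_into_rtranclp, rule local_moveI)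

lemma local_move_append_context:
  assumes "local_move s u v"
  shows "local_move s (p @ u @ q) (p @ v @ q)"
proof -
  obtain xs ys a b c d where "u = xs @ [a, b] @ ys" "v = xs @ [c, d] @ ys" "pair_move s (a, b) (c, d)"
    using assms unfolding local_move_def by blast
  then show ?thesis
    using local_moveI[of s a b c d "p @ xs" "ys @ q"] by simp
qed

lemma equiv_str_append_context: "equiv_str s u v \<Longrightarrow> equiv_str s (p @ u @ q) (p @ v @ q)"
  unfolding equiv_str_def
  by (induction rule: rtranclp_induct) (auto intro: rtranclp.rtrancl_into_rtrancl local_move_append_context)

lemma equiv_str_Cons: "equiv_str s u v \<Longrightarrow> equiv_str s (x # u) (x # v)"
  using equiv_str_append_context[of s u v "[x]" "[]"] by simp

lemma equiv_str_zero_past: "set r \<subseteq> Sigma_star s \<Longrightarrow> equiv_str s (0 # r @ ys) (r @ 0 # ys)"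
proof (induction r)
  case (Cons y r)
  have "equiv_str s (0 # y # r @ ys) (y # 0 # r @ ys)"
    using Cons.prems equiv_str_pair_move[OF pair_move_swap_zero, of y s "[]"] by simp
  also have "equiv_str s \<dots> (y # r @ 0 # ys)"
    using Cons by (simp add: equiv_str_Cons)
  finally show ?case
    by simp
qed simp

lemma equiv_str_cancel_cons:
  assumes x: "x \<in> Sigma s" and r: "set r \<subseteq> Sigma_star s" "length r \<le> n"
  shows "equiv_str s (x # pad_zeros n r) (pad_zeros (Suc n) (cancel_cons x r))"
proof -
  consider "x = 0" | r' where "0 < x" "r = - x # r'" | "x \<noteq> 0" "cancel_cons x r = x # r"
    by (cases r; cases "0 < x"; cases "hd r = - x"; auto simp: cancel_cons_def)
  then show ?thesis
  proof cases
    case 1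
    then show ?thesis
      using r equiv_str_zero_past[of r s] by (simp add: pad_zeros_def Suc_diff_le)
  next
    case (2 r')
    let ?z = "replicate (n - length r) 0"
    have "equiv_str s (x # - x # r' @ ?z) (0 # 0 # r' @ ?z)"
      using equiv_str_pair_move[OF pair_move_cancel, of x s "[]"] x 2 by (simp add: Sigma_def)
    also have "equiv_str s \<dots> (0 # r' @ 0 # ?z)"
      using 2 r equiv_str_zero_past by (simp add: equiv_str_Cons)
    also have "equiv_str s \<dots> (r' @ 0 # 0 # ?z)"
      using 2 r equiv_str_zero_past by simp
    finally have "equiv_str s (x # - x # r' @ ?z) (r' @ 0 # 0 # ?z)" .
    moreover have "n - length r' = Suc (n - length r)"
      using 2 r by simp
    ultimately show ?thesis
      using 2 r by (simp add: pad_zeros_def Suc_diff_le)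
  qed (simp add: pad_zeros_def)
qed

lemma equiv_str_pad_reduce:
  "set t \<subseteq> Sigma s \<Longrightarrow> equiv_str s t (pad_zeros (length t) (reduce t))"
proof (induction t)
  case (Cons x t)
  have "set (reduce t) \<subseteq> Sigma_star s"
    using set_reduce[of t] Cons.prems by (auto simp: Sigma_star_def)
  have "equiv_str s (x # t) (x # pad_zeros (length t) (reduce t))"
    using Cons by (simp add: equiv_str_Cons)
  also have "equiv_str s \<dots> (pad_zeros (Suc (length t)) (cancel_cons x (reduce t)))"
    using Cons.prems \<open>set (reduce t) \<subseteq> Sigma_star s\<close> length_reduce_le
    by (simp add: equiv_str_cancel_cons)
  finally show ?case
    by simp
qed (simp add: pad_zeros_def)

lemma reduced_iff_normal:
  assumes "set xs \<subseteq> Sigma s"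
  shows "reduced xs \<longleftrightarrow> set xs \<subseteq> Sigma_star s \<and>
    \<not> (\<exists>i. i + 1 < length xs \<and> xs ! i \<in> {1 .. int s} \<and> xs ! (i + 1) = - (xs ! i))"
proof -
  have positive: "xs ! i \<in> {1 .. int s} \<longleftrightarrow> 0 < xs ! i" if "i < length xs" for i
    using assms nth_mem[OF that] by (auto simp: Sigma_def)
  have "(\<exists>i. i + 1 < length xs \<and> xs ! i \<in> {1 .. int s} \<and> xs ! (i + 1) = - (xs ! i)) \<longleftrightarrow>
      (\<exists>i. Suc i < length xs \<and> 0 < xs ! i \<and> xs ! Suc i = - (xs ! i))"
    using positive by (metis Suc_eq_plus1 Suc_lessD)
  moreover have "0 \<notin> set xs \<longleftrightarrow> set xs \<subseteq> Sigma_star s"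
    using assms by (auto simp: Sigma_star_def)
  ultimately show ?thesis
    unfolding reduced_def successively_conv_nth by blast
qed

lemma normal_form_iff:
  "normal_form s n w \<longleftrightarrow>
    (\<exists>xs. reduced xs \<and> set xs \<subseteq> Sigma s \<and> length xs \<le> n \<and> w = pad_zeros n xs)"
proof
  assume "normal_form s n w"
  then obtain xs where "length xs \<le> n" "w = pad_zeros n xs" "set xs \<subseteq> Sigma_star s"
    "\<not> (\<exists>i. i + 1 < length xs \<and> xs ! i \<in> {1 .. int s} \<and> xs ! (i + 1) = - (xs ! i))"
    unfolding normal_form_def pad_zeros_def by blast
  moreover have "set xs \<subseteq> Sigma s"
    using \<open>set xs \<subseteq> Sigma_star s\<close> by (auto simp: Sigma_star_def)
  ultimately show "\<exists>xs. reduced xs \<and> set xs \<subseteq> Sigma s \<and> length xs \<le> n \<and> w = pad_zeros n xs"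
    using reduced_iff_normal by blast
next
  assume "\<exists>xs. reduced xs \<and> set xs \<subseteq> Sigma s \<and> length xs \<le> n \<and> w = pad_zeros n xs"
  then show "normal_form s n w"
    unfolding normal_form_def pad_zeros_def using reduced_iff_normal by blast
qed

theorem lemma5:
  fixes s n :: nat and t :: "int list"
  assumes "s \<ge> 1" and "n \<ge> 1"
    and "length t = n" and "set t \<subseteq> Sigma s"
  shows "\<exists>!w. length w = n \<and> set w \<subseteq> Sigma s \<and> normal_form s n w \<and> equiv_str s t w"
proof (rule ex1I[where a = "pad_zeros n (reduce t)"], intro conjI)
  have set: "set (reduce t) \<subseteq> Sigma s" and length: "length (reduce t) \<le> n"
    using set_reduce[of t] length_reduce_le[of t] assms(3,4) by auto
  then show "normal_form s n (pad_zeros n (reduce t))"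
    using reduced_reduce normal_form_iff by blast
  show "length (pad_zeros n (reduce t)) = n"
    using length by (simp add: pad_zeros_def)
  show "set (pad_zeros n (reduce t)) \<subseteq> Sigma s"
    using set by (auto simp: pad_zeros_def Sigma_def)
  show "equiv_str s t (pad_zeros n (reduce t))"
    using equiv_str_pad_reduce[OF assms(4)] assms(3) by simp
next
  fix w
  assume "length w = n \<and> set w \<subseteq> Sigma s \<and> normal_form s n w \<and> equiv_str s t w"
  then obtain xs where "reduced xs" "w = pad_zeros n xs" "equiv_str s t w"
    by (auto simp: normal_form_iff)
  then show "w = pad_zeros n (reduce t)"
    using reduce_equiv_str reduce_pad_zeros reduce_reduced by metis
qed

end
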